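(* Let $\overline{\mathbb P}$ be a probability measure on $\Omega_+^2$ such that $\overline{\mathbb P}[\{(\omega_1,\omega_2): \omega_1\le\omega_2\}]=1$ and such that, for $i=1,2$, $(\omega_i(x))_{x\ge0}$ is stationary and ergodic under $\overline{\mathbb P}$. For $i=1,2$ let $v_i$ denote the $\overline{\mathbb P}\times P_{0,\omega_i}$-a.s. constant limit of $X_n/n$ as $n\to\infty$. Then $v_1\le v_2$.
   Context: Cookie environments: $\Omega_+=([1/2,1]^{\mathbb N})^{\mathbb Z}$, $\omega(x)=(\omega(x,i))_{i\ge1}$; $\omega_1\le\omega_2$ means $\omega_1(x,i)\le\omega_2(x,i)$ for all $x\in\mathbb Z,i\ge1$. $P_{x,\omega}$ is the law of the nearest-neighbor process $(X_n)_{n\ge0}$ with $X_0=x$ which, on its $i$-th visit to site $z$, jumps to $z+1$ with probability $\omega(z,i)$ and to $z-1$ otherwise. $\overline{\mathbb P}\times P_{0,\omega_i}$ denotes the measure $\overline{\mathbb E}[P_{0,\omega_i}[\cdot]]$. (Under stationarity and ergodicity of the environment, $X_n/n$ converges almost surely to a deterministic constant.) *)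

theory Defs
  imports "HOL-Probability.Probability"
begin

text \<open>An environment is encoded as a function
  \<open>\<omega> :: int \<Rightarrow> nat \<Rightarrow> real\<close> where \<open>\<omega> x k\<close> is the paper's \<open>\<omega>(x, k+1)\<close>,
  i.e. the right-jump probability on the \<open>(k+1)\<close>-th visit to \<open>x\<close>
  (equivalently: after \<open>k\<close> previous visits).\<close>

type_synonym env = "int \<Rightarrow> nat \<Rightarrow> real"

definition Omega_plus :: "env set" where
  "Omega_plus = {\<omega>. \<forall>x k. 1/2 \<le> \<omega> x k \<and> \<omega> x k \<le> 1}"

definition env_le :: "env \<Rightarrow> env \<Rightarrow> bool" where
  "env_le \<omega>1 \<omega>2 \<longleftrightarrow> (\<forall>x k. \<omega>1 x k \<le> \<omega>2 x k)"

definition env_M :: "env measure" where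
  "env_M = PiM UNIV (\<lambda>_::int. PiM UNIV (\<lambda>_::nat. borel :: real measure))"

definition path_M :: "(nat \<Rightarrow> int) measure" where
  "path_M = PiM UNIV (\<lambda>_::nat. count_space UNIV)"

definition step_prob :: "env \<Rightarrow> (nat \<Rightarrow> int) \<Rightarrow> nat \<Rightarrow> real" where
  "step_prob \<omega> p k =
     (let i = card {j. j < k \<and> p j = p k} in
      if p (Suc k) = p k + 1 then \<omega> (p k) i
      else if p (Suc k) = p k - 1 then 1 - \<omega> (p k) i
      else 0)"

definition path_prob :: "env \<Rightarrow> int \<Rightarrow> (nat \<Rightarrow> int) \<Rightarrow> nat \<Rightarrow> real" where
  "path_prob \<omega> x p n = (if p 0 = x then (\<Prod>k<n. step_prob \<omega> p k) else 0)"

definition walk_law :: "env \<Rightarrow> int \<Rightarrow> (nat \<Rightarrow> int) measure \<Rightarrow> bool" where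
  "walk_law \<omega> x M \<longleftrightarrow>
     prob_space M \<and> sets M = sets path_M \<and>
     (\<forall>n p. measure M {X \<in> space M. \<forall>k\<le>n. X k = p k} = path_prob \<omega> x p n)"

definition seq_M :: "(nat \<Rightarrow> nat \<Rightarrow> real) measure" where
  "seq_M = PiM UNIV (\<lambda>_::nat. PiM UNIV (\<lambda>_::nat. borel :: real measure))"

definition seq_shift :: "(nat \<Rightarrow> nat \<Rightarrow> real) \<Rightarrow> (nat \<Rightarrow> nat \<Rightarrow> real)" where
  "seq_shift s = (\<lambda>x. s (Suc x))"

definition stationary_ergodic :: "'a measure \<Rightarrow> ('a \<Rightarrow> nat \<Rightarrow> nat \<Rightarrow> real) \<Rightarrow> bool" where
  "stationary_ergodic M Y \<longleftrightarrow>
     Y \<in> M \<rightarrow>\<^sub>M seq_M \<and>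
     distr M seq_M (seq_shift \<circ> Y) = distr M seq_M Y \<and>
     (\<forall>A \<in> sets seq_M. seq_shift -` A \<inter> space seq_M = A \<longrightarrow>
        measure M (Y -` A \<inter> space M) = 0 \<or> measure M (Y -` A \<inter> space M) = 1)"

definition nonneg_part :: "env \<Rightarrow> nat \<Rightarrow> nat \<Rightarrow> real" where
  "nonneg_part \<omega> = (\<lambda>x. \<omega> (int x))"

end

theory Submission
  imports Defs
begin

text \<open>Encode the randomness of the walk in a field of arrows: the arrow at \<open>(x, i)\<close> says whether
  the walk jumps right on its \<open>(i+1)\<close>-th visit to \<open>x\<close>. Under \<open>P_{x,\<omega>}\<close> these arrows are
  independent with right-probability \<open>\<omega> x i\<close>, so for \<open>\<omega>1 \<le> \<omega>2\<close> the arrow fields can be coupled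
  monotonically. Counting the crossings of each edge shows that turning arrows to the right can only
  make the walk reach any level above its start sooner, and by reflection any level below it later.
  Hence under \<open>\<omega>2\<close> the walk is at least as likely as under \<open>\<omega>1\<close> to reach \<open>c n\<close> by time \<open>n\<close>;
  if \<open>v2 < v1\<close> and \<open>c\<close> lies strictly between them, these probabilities would tend to \<open>0\<close> and \<open>1\<close>
  respectively.\<close>

section \<open>Independent arrows\<close>

type_synonym arrows = "int \<times> nat \<Rightarrow> bool"

definition unit_env :: "env \<Rightarrow> bool" where
  "unit_env \<omega> \<longleftrightarrow> (\<forall>x i. 0 \<le> \<omega> x i \<and> \<omega> x i \<le> 1)"

text \<open>Expectation of \<open>f\<close> when the arrows at the listed pairs are independent with
  \<open>P(right) = \<omega> x i\<close> and all other arrows point left.\<close>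

fun arrow_expect :: "env \<Rightarrow> (int \<times> nat) list \<Rightarrow> (arrows \<Rightarrow> real) \<Rightarrow> real" where
  "arrow_expect \<omega> [] f = f (\<lambda>_. False)"
| "arrow_expect \<omega> ((x, i) # cs) f =
     \<omega> x i * arrow_expect \<omega> cs (\<lambda>\<alpha>. f (\<alpha>((x, i) := True)))
     + (1 - \<omega> x i) * arrow_expect \<omega> cs (\<lambda>\<alpha>. f (\<alpha>((x, i) := False)))"

lemma arrow_expect_const [simp]: "arrow_expect \<omega> cs (\<lambda>_. k) = k"
  by (induction \<omega> cs "\<lambda>_::arrows. k" rule: arrow_expect.induct) (auto simp: algebra_simps)

lemma arrow_expect_cmult: "arrow_expect \<omega> cs (\<lambda>\<alpha>. f \<alpha> * k) = arrow_expect \<omega> cs f * k"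
  by (induction \<omega> cs f rule: arrow_expect.induct) (auto simp: algebra_simps)

lemma arrow_expect_sum:
  "arrow_expect \<omega> cs (\<lambda>\<alpha>. \<Sum>p\<in>P. f p \<alpha>) = (\<Sum>p\<in>P. arrow_expect \<omega> cs (f p))"
  by (induction cs arbitrary: f) (auto simp: sum.distrib sum_distrib_left)

lemma arrow_expect_mono:
  assumes "unit_env \<omega>" "f \<le> g"
  shows "arrow_expect \<omega> cs f \<le> arrow_expect \<omega> cs g"
  using assms
proof (induction \<omega> cs f arbitrary: g rule: arrow_expect.induct)
  case (2 \<omega> x i cs f)
  then have "0 \<le> \<omega> x i" "\<omega> x i \<le> 1"
    by (auto simp: unit_env_def)
  with 2 show ?case
    by (simp add: le_fun_def add_mono mult_left_mono)
qed (simp add: le_fun_def)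

lemma arrow_expect_cong_support:
  assumes "\<And>\<alpha>. Collect \<alpha> \<subseteq> set cs \<Longrightarrow> f \<alpha> = g \<alpha>"
  shows "arrow_expect \<omega> cs f = arrow_expect \<omega> cs g"
  using assms
proof (induction cs arbitrary: f g)
  case (Cons c cs)
  obtain x i where c: "c = (x, i)"
    by fastforce
  have "arrow_expect \<omega> cs (\<lambda>\<alpha>. f (\<alpha>(c := b))) = arrow_expect \<omega> cs (\<lambda>\<alpha>. g (\<alpha>(c := b)))" for b
    by (rule Cons.IH, rule Cons.prems) auto
  then show ?case
    by (simp add: c)
qed simp

lemma arrow_expect_factor:
  assumes "\<And>\<alpha> b. f (\<alpha>((x, i) := b)) = f \<alpha>" and "(x, i) \<in> set cs"
  shows "arrow_expect \<omega> cs (\<lambda>\<alpha>. f \<alpha> * g (\<alpha> (x, i)))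
    = arrow_expect \<omega> cs f * (\<omega> x i * g True + (1 - \<omega> x i) * g False)"
  using assms
proof (induction cs arbitrary: f)
  case (Cons d cs)
  obtain y j where d: "d = (y, j)"
    by fastforce
  show ?case
  proof (cases "d = (x, i)")
    case True
    have "(\<lambda>\<alpha>. f (\<alpha>(d := b)) * g ((\<alpha>(d := b)) (x, i))) = (\<lambda>\<alpha>. f \<alpha> * g b)" for b
      by (intro ext) (simp only: True Cons.prems(1) fun_upd_same)
    moreover have "(\<lambda>\<alpha>. f (\<alpha>(d := b))) = f" for b
      by (intro ext) (simp only: True Cons.prems(1))
    ultimately show ?thesis
      using True by (simp only: arrow_expect.simps arrow_expect_cmult) (simp add: algebra_simps)
  next
    case False
    let ?g = "\<omega> x i * g True + (1 - \<omega> x i) * g False"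
    have IH: "arrow_expect \<omega> cs (\<lambda>\<alpha>. f (\<alpha>((y, j) := b)) * g (\<alpha> (x, i)))
        = arrow_expect \<omega> cs (\<lambda>\<alpha>. f (\<alpha>((y, j) := b))) * ?g" for b
    proof (rule Cons.IH)
      show "f ((\<alpha>((x, i) := b'))((y, j) := b)) = f (\<alpha>((y, j) := b))" for \<alpha> b'
        using Cons.prems(1) False by (metis d fun_upd_twist)
    qed (use Cons.prems(2) False in auto)
    have "arrow_expect \<omega> ((y, j) # cs) (\<lambda>\<alpha>. f \<alpha> * g (\<alpha> (x, i)))
        = \<omega> y j * arrow_expect \<omega> cs (\<lambda>\<alpha>. f (\<alpha>((y, j) := True)) * g (\<alpha> (x, i)))
          + (1 - \<omega> y j) * arrow_expect \<omega> cs (\<lambda>\<alpha>. f (\<alpha>((y, j) := False)) * g (\<alpha> (x, i)))"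
      using False d by (simp only: arrow_expect.simps fun_upd_other[of "(x, i)" "(y, j)"])
    also have "\<dots> = arrow_expect \<omega> ((y, j) # cs) f * ?g"
      by (simp only: IH arrow_expect.simps) (simp add: algebra_simps)
    finally show ?thesis
      by (simp only: d)
  qed
qed simp

lemma arrow_expect_mono_env:
  assumes "unit_env \<omega>1" "unit_env \<omega>2" "\<omega>1 \<le> \<omega>2" "mono f"
  shows "arrow_expect \<omega>1 cs f \<le> arrow_expect \<omega>2 cs f"
  using assms(4)
proof (induction cs arbitrary: f)
  case (Cons c cs)
  obtain x i where c: "c = (x, i)"
    by fastforce
  let ?f1 = "\<lambda>\<alpha>. f (\<alpha>(c := True))" and ?f0 = "\<lambda>\<alpha>. f (\<alpha>(c := False))"
  let ?p = "\<omega>1 x i" and ?q = "\<omega>2 x i"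
  have "mono (\<lambda>\<alpha>. f (\<alpha>(c := b)))" for b
    by (intro monoI monoD[OF Cons.prems]) (simp add: le_fun_def)
  then have IH: "arrow_expect \<omega>1 cs ?f1 \<le> arrow_expect \<omega>2 cs ?f1"
      "arrow_expect \<omega>1 cs ?f0 \<le> arrow_expect \<omega>2 cs ?f0"
    using Cons.IH by blast+
  have f01: "arrow_expect \<omega>2 cs ?f0 \<le> arrow_expect \<omega>2 cs ?f1"
    using assms(2) by (rule arrow_expect_mono) (intro le_funI monoD[OF Cons.prems], simp add: le_fun_def)
  have pq: "0 \<le> ?p" "?p \<le> ?q" "?q \<le> 1"
    using assms(1-3) by (auto simp: unit_env_def le_fun_def)
  \<comment> \<open>Raising the right-jump probability from \<open>?p\<close> to \<open>?q\<close> shifts weight to the larger \<open>?f1\<close>.\<close>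
  have "?p * arrow_expect \<omega>1 cs ?f1 + (1 - ?p) * arrow_expect \<omega>1 cs ?f0
      \<le> ?p * arrow_expect \<omega>2 cs ?f1 + (1 - ?p) * arrow_expect \<omega>2 cs ?f0"
    using IH pq by (intro add_mono mult_left_mono) auto
  also have "\<dots> \<le> ?q * arrow_expect \<omega>2 cs ?f1 + (1 - ?q) * arrow_expect \<omega>2 cs ?f0"
  proof -
    have "0 \<le> (?q - ?p) * (arrow_expect \<omega>2 cs ?f1 - arrow_expect \<omega>2 cs ?f0)"
      using f01 pq by simp
    then show ?thesis
      by (simp add: algebra_simps)
  qed
  finally show ?case
    by (simp add: c)
qed simp

section \<open>The walk driven by arrows\<close>

primrec arrow_walk_state :: "arrows \<Rightarrow> int \<Rightarrow> nat \<Rightarrow> int \<times> (int \<Rightarrow> nat)" where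
  "arrow_walk_state \<alpha> x 0 = (x, \<lambda>_. 0)"
| "arrow_walk_state \<alpha> x (Suc m) =
     (let (y, v) = arrow_walk_state \<alpha> x m in (if \<alpha> (y, v y) then y + 1 else y - 1, v(y := Suc (v y))))"

definition arrow_walk :: "arrows \<Rightarrow> int \<Rightarrow> nat \<Rightarrow> int" where
  "arrow_walk \<alpha> x m = fst (arrow_walk_state \<alpha> x m)"

definition visits :: "arrows \<Rightarrow> int \<Rightarrow> nat \<Rightarrow> int \<Rightarrow> nat" where
  "visits \<alpha> x m = snd (arrow_walk_state \<alpha> x m)"

lemma arrow_walk_0 [simp]: "arrow_walk \<alpha> x 0 = x"
  and visits_0 [simp]: "visits \<alpha> x 0 = (\<lambda>_. 0)"
  by (simp_all add: arrow_walk_def visits_def)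

lemma arrow_walk_Suc:
    "arrow_walk \<alpha> x (Suc m) =
      (if \<alpha> (arrow_walk \<alpha> x m, visits \<alpha> x m (arrow_walk \<alpha> x m))
       then arrow_walk \<alpha> x m + 1 else arrow_walk \<alpha> x m - 1)"
  and visits_Suc:
    "visits \<alpha> x (Suc m) = (visits \<alpha> x m)(arrow_walk \<alpha> x m := Suc (visits \<alpha> x m (arrow_walk \<alpha> x m)))"
  by (simp_all add: arrow_walk_def visits_def split: prod.split)

lemma visits_eq_card: "visits \<alpha> x m y = card {j. j < m \<and> arrow_walk \<alpha> x j = y}"
proof (induction m)
  case (Suc m)
  have "{j. j < Suc m \<and> arrow_walk \<alpha> x j = y}
      = {j. j < m \<and> arrow_walk \<alpha> x j = y} \<union> (if arrow_walk \<alpha> x m = y then {m} else {})"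
    by (auto simp: less_Suc_eq)
  with Suc show ?case
    by (auto simp: visits_Suc)
qed simp

lemma visits_eq_0_iff: "visits \<alpha> x m y = 0 \<longleftrightarrow> (\<forall>j<m. arrow_walk \<alpha> x j \<noteq> y)"
  by (auto simp: visits_eq_card)

lemma sum_visits:
  assumes "finite S" "\<forall>j<m. arrow_walk \<alpha> x j \<in> S"
  shows "(\<Sum>y\<in>S. visits \<alpha> x m y) = m"
  using assms(2)
proof (induction m)
  case (Suc m)
  have "(\<Sum>y\<in>S. visits \<alpha> x (Suc m) y) = (\<Sum>y\<in>S. visits \<alpha> x m y + of_bool (y = arrow_walk \<alpha> x m))"
    by (rule sum.cong) (auto simp: visits_Suc)
  with Suc assms(1) show ?case
    by (simp add: sum.distrib)
qed simp

lemma arrow_walk_dist_le: "\<bar>arrow_walk \<alpha> x m - x\<bar> \<le> int m"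
  by (induction m) (auto simp: arrow_walk_Suc)

definition right_count :: "(nat \<Rightarrow> bool) \<Rightarrow> nat \<Rightarrow> nat" where
  "right_count c k = card {i. i < k \<and> c i}"

definition left_count :: "(nat \<Rightarrow> bool) \<Rightarrow> nat \<Rightarrow> nat" where
  "left_count c k = card {i. i < k \<and> \<not> c i}"

lemma right_count_Suc: "right_count c (Suc k) = right_count c k + of_bool (c k)"
  and left_count_Suc: "left_count c (Suc k) = left_count c k + of_bool (\<not> c k)"
proof -
  have "{i. i < Suc k \<and> c i} = {i. i < k \<and> c i} \<union> (if c k then {k} else {})"
    "{i. i < Suc k \<and> \<not> c i} = {i. i < k \<and> \<not> c i} \<union> (if c k then {} else {k})"
    by (auto simp: less_Suc_eq)
  then show "right_count c (Suc k) = right_count c k + of_bool (c k)"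
    "left_count c (Suc k) = left_count c k + of_bool (\<not> c k)"
    by (auto simp: right_count_def left_count_def)
qed

lemma right_count_mono: "c \<le> d \<Longrightarrow> k \<le> k' \<Longrightarrow> right_count c k \<le> right_count d k'"
  unfolding right_count_def by (rule card_mono) (auto simp: le_fun_def)

lemma left_count_mono: "c \<le> d \<Longrightarrow> k \<le> k' \<Longrightarrow> left_count d k \<le> left_count c k'"
  unfolding left_count_def by (rule card_mono) (auto simp: le_fun_def)

text \<open>Columns \<open>c \<le> d\<close> are read from the bottom: having used fewer right arrows of \<open>d\<close> than of
  \<open>c\<close> means having used fewer arrows of \<open>d\<close> altogether, hence also fewer left arrows.\<close>

lemma right_count_less_imp_left_count_le:
  assumes "c \<le> d" "right_count d k' < right_count c k"
  shows "k' < k \<and> left_count d k' \<le> left_count c k"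
proof -
  have "k' < k"
    using assms right_count_mono[OF assms(1), of k k'] by linarith
  then show ?thesis
    using left_count_mono[OF assms(1)] by simp
qed

lemma right_count_le_imp_left_count_le:
  assumes "c \<le> d" "right_count d k' \<le> right_count c k" "0 < k' \<Longrightarrow> d (k' - 1)"
  shows "k' \<le> k \<and> left_count d k' \<le> left_count c k"
proof -
  have "k' \<le> k"
  proof (rule ccontr)
    assume "\<not> k' \<le> k"
    then have "right_count d k' = right_count d (k' - 1) + 1" "k \<le> k' - 1"
      using assms(3) right_count_Suc[of d "k' - 1"] by auto
    then show False
      using assms(2) right_count_mono[OF assms(1), of k "k' - 1"] by linarith
  qed
  then show ?thesis
    using left_count_mono[OF assms(1)] by simp
qed

definition right_jumps :: "arrows \<Rightarrow> int \<Rightarrow> nat \<Rightarrow> int \<Rightarrow> nat" where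
  "right_jumps \<alpha> x m y = right_count (curry \<alpha> y) (visits \<alpha> x m y)"

definition left_jumps :: "arrows \<Rightarrow> int \<Rightarrow> nat \<Rightarrow> int \<Rightarrow> nat" where
  "left_jumps \<alpha> x m y = left_count (curry \<alpha> y) (visits \<alpha> x m y)"

lemma net_crossings:
  "int (right_jumps \<alpha> x m y) - int (left_jumps \<alpha> x m (y + 1)) =
     of_bool (x \<le> y \<and> y < arrow_walk \<alpha> x m) - of_bool (arrow_walk \<alpha> x m \<le> y \<and> y < x)"
proof (induction m arbitrary: y)
  case (Suc m)
  let ?z = "arrow_walk \<alpha> x m" and ?k = "visits \<alpha> x m (arrow_walk \<alpha> x m)"
  have right: "right_jumps \<alpha> x (Suc m) y = right_jumps \<alpha> x m y + of_bool (y = ?z \<and> \<alpha> (?z, ?k))"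
    and left: "left_jumps \<alpha> x (Suc m) (y + 1)
      = left_jumps \<alpha> x m (y + 1) + of_bool (y + 1 = ?z \<and> \<not> \<alpha> (?z, ?k))"
    by (auto simp: right_jumps_def left_jumps_def visits_Suc right_count_Suc left_count_Suc)
  show ?case
  proof (cases "\<alpha> (?z, ?k)")
    case True
    then have "arrow_walk \<alpha> x (Suc m) = ?z + 1"
      by (simp add: arrow_walk_Suc)
    with Suc.IH[of y] right left True show ?thesis
      by (simp add: of_bool_def split: if_splits)
  next
    case False
    then have "arrow_walk \<alpha> x (Suc m) = ?z - 1"
      by (simp add: arrow_walk_Suc)
    with Suc.IH[of y] right left False show ?thesis
      by (simp add: of_bool_def split: if_splits)
  qed
qed (simp add: right_jumps_def left_jumps_def right_count_def left_count_def)

lemma last_jump_right_below: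
  "y < arrow_walk \<alpha> x m \<Longrightarrow> 0 < visits \<alpha> x m y \<Longrightarrow> \<alpha> (y, visits \<alpha> x m y - 1)"
proof (induction m)
  case (Suc m)
  then show ?case
    by (cases "y = arrow_walk \<alpha> x m") (auto simp: arrow_walk_Suc visits_Suc split: if_splits)
qed simp

section \<open>More right arrows reach higher levels sooner\<close>

text \<open>Step of a downward induction over the sites below \<open>arrow_walk \<alpha> s T\<close>: net crossings turn the
  comparison of left jumps from \<open>y + 1\<close> into one of right jumps from \<open>y\<close>, and the column lemmas
  into comparisons of visits and of left jumps at \<open>y\<close>.\<close>

lemma visits_le_step:
  assumes le: "\<alpha> \<le> \<beta>" and below: "y < arrow_walk \<alpha> s T"
    and left: "left_jumps \<beta> s T (y + 1) \<le> left_jumps \<alpha> s T (y + 1)"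
  shows "left_jumps \<beta> s T y \<le> left_jumps \<alpha> s T y \<and> visits \<beta> s T y \<le> visits \<alpha> s T y
    \<and> (arrow_walk \<beta> s T \<le> y \<longrightarrow> visits \<beta> s T y < visits \<alpha> s T y)"
proof -
  have col: "curry \<alpha> y \<le> curry \<beta> y"
    using le by (simp add: le_fun_def)
  have right_\<alpha>: "int (right_jumps \<alpha> s T y) = int (left_jumps \<alpha> s T (y + 1)) + of_bool (s \<le> y)"
    using net_crossings[of \<alpha> s T y] below by auto
  have right_\<beta>: "int (right_jumps \<beta> s T y) = int (left_jumps \<beta> s T (y + 1))
      + of_bool (s \<le> y \<and> y < arrow_walk \<beta> s T) - of_bool (arrow_walk \<beta> s T \<le> y \<and> y < s)"
    using net_crossings[of \<beta> s T y] by simp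
  show ?thesis
  proof (cases "arrow_walk \<beta> s T \<le> y")
    case True
    then have "right_jumps \<beta> s T y < right_jumps \<alpha> s T y"
      using right_\<alpha> right_\<beta> left by (cases "s \<le> y") auto
    then have "visits \<beta> s T y < visits \<alpha> s T y \<and> left_jumps \<beta> s T y \<le> left_jumps \<alpha> s T y"
      unfolding right_jumps_def left_jumps_def by (rule right_count_less_imp_left_count_le[OF col])
    then show ?thesis
      using True by simp
  next
    case False
    then have "right_jumps \<beta> s T y \<le> right_jumps \<alpha> s T y"
      using right_\<alpha> right_\<beta> left by auto
    moreover have "curry \<beta> y (visits \<beta> s T y - 1)" if "0 < visits \<beta> s T y"
      using last_jump_right_below[of y \<beta> s T] that False by simp
    ultimately have "visits \<beta> s T y \<le> visits \<alpha> s T y \<and> left_jumps \<beta> s T y \<le> left_jumps \<alpha> s T y"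
      unfolding right_jumps_def left_jumps_def by (rule right_count_le_imp_left_count_le[OF col])
    then show ?thesis
      using False by simp
  qed
qed

lemma visits_le_below:
  assumes le: "\<alpha> \<le> \<beta>"
    and top: "left_jumps \<beta> s T (arrow_walk \<alpha> s T) \<le> left_jumps \<alpha> s T (arrow_walk \<alpha> s T)"
    and below: "y < arrow_walk \<alpha> s T"
  shows "visits \<beta> s T y \<le> visits \<alpha> s T y
    \<and> (arrow_walk \<beta> s T \<le> y \<longrightarrow> visits \<beta> s T y < visits \<alpha> s T y)"
proof -
  have "left_jumps \<beta> s T z \<le> left_jumps \<alpha> s T z" if "z \<le> arrow_walk \<alpha> s T" for z
    using that
  proof (induction z rule: int_le_induct)
    case (step z)
    then show ?case
      using visits_le_step[OF le, of "z - 1"] by simp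
  qed (rule top)
  then show ?thesis
    using visits_le_step[OF le below] below by simp
qed

lemma reaches_before_first_hit:
  assumes le: "\<alpha> \<le> \<beta>" and start: "s < arrow_walk \<alpha> s T"
    and first: "\<forall>m<T. arrow_walk \<alpha> s m < arrow_walk \<alpha> s T"
  shows "\<exists>m\<le>T. arrow_walk \<alpha> s T \<le> arrow_walk \<beta> s m"
proof (rule ccontr)
  define a where "a = arrow_walk \<alpha> s T"
  assume "\<not> ?thesis"
  then have stays_below: "\<forall>m\<le>T. arrow_walk \<beta> s m < a"
    by (auto simp: a_def)
  have "visits \<beta> s T a = 0"
    using stays_below by (auto simp: visits_eq_0_iff dest: less_imp_le_nat)
  then have top: "left_jumps \<beta> s T a \<le> left_jumps \<alpha> s T a"
    by (simp add: left_jumps_def left_count_def)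
  \<comment> \<open>Both walks spend their first \<open>T\<close> steps in \<open>S\<close>, but \<open>\<beta>\<close> visits each site at most as often
      as \<open>\<alpha>\<close> and the site \<open>a - 1\<close> strictly less often.\<close>
  define S where "S = {s - int T .. a - 1}"
  have in_S: "arrow_walk \<gamma> s j \<in> S" if "j < T" "arrow_walk \<gamma> s j < a" for \<gamma> j
    using arrow_walk_dist_le[of \<gamma> s j] that by (auto simp: S_def)
  have "(\<Sum>y\<in>S. visits \<beta> s T y) = T"
    by (rule sum_visits) (use in_S stays_below in \<open>auto simp: S_def\<close>)
  moreover have "(\<Sum>y\<in>S. visits \<alpha> s T y) = T"
    by (rule sum_visits) (use in_S first in \<open>auto simp: S_def a_def\<close>)
  moreover have "(\<Sum>y\<in>S. visits \<beta> s T y) < (\<Sum>y\<in>S. visits \<alpha> s T y)"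
  proof (rule sum_strict_mono_ex1)
    show "\<forall>y\<in>S. visits \<beta> s T y \<le> visits \<alpha> s T y"
      using visits_le_below[OF le top[unfolded a_def]] by (auto simp: S_def a_def)
    show "\<exists>y\<in>S. visits \<beta> s T y < visits \<alpha> s T y"
      using visits_le_below[OF le top[unfolded a_def], of "a - 1"] stays_below start
      by (auto simp: S_def a_def)
  qed (simp add: S_def)
  ultimately show False
    by simp
qed

lemma reaches_above_mono:
  assumes le: "\<alpha> \<le> \<beta>" and reach: "\<exists>m\<le>n. a \<le> arrow_walk \<alpha> s m"
  shows "\<exists>m\<le>n. a \<le> arrow_walk \<beta> s m"
proof (cases "a \<le> s")
  case True
  then show ?thesis
    by (intro exI[of _ 0]) simp
next
  case False
  obtain m0 where "m0 \<le> n" "a \<le> arrow_walk \<alpha> s m0"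
    using reach by blast
  define T where "T = (LEAST m. a \<le> arrow_walk \<alpha> s m)"
  have hit: "a \<le> arrow_walk \<alpha> s T"
    unfolding T_def by (rule LeastI) fact
  have "T \<le> m0"
    unfolding T_def by (rule Least_le) fact
  have "\<forall>m<T. arrow_walk \<alpha> s m < arrow_walk \<alpha> s T"
  proof (intro allI impI)
    fix m assume "m < T"
    then have "\<not> a \<le> arrow_walk \<alpha> s m"
      unfolding T_def by (rule not_less_Least)
    with hit show "arrow_walk \<alpha> s m < arrow_walk \<alpha> s T"
      by simp
  qed
  moreover have "s < arrow_walk \<alpha> s T"
    using False hit by simp
  ultimately obtain m where "m \<le> T" "arrow_walk \<alpha> s T \<le> arrow_walk \<beta> s m"
    using reaches_before_first_hit[OF le] by blast
  then show ?thesis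
    using hit \<open>T \<le> m0\<close> \<open>m0 \<le> n\<close> by (intro exI[of _ m]) simp
qed

definition reflect_arrows :: "arrows \<Rightarrow> arrows" where
  "reflect_arrows \<alpha> = (\<lambda>(y, i). \<not> \<alpha> (- y, i))"

lemma arrow_walk_state_reflect:
  "arrow_walk_state (reflect_arrows \<alpha>) (- x) m = (- arrow_walk \<alpha> x m, \<lambda>y. visits \<alpha> x m (- y))"
  by (induction m) (auto simp: arrow_walk_Suc visits_Suc reflect_arrows_def fun_eq_iff)

lemma arrow_walk_reflect: "arrow_walk (reflect_arrows \<alpha>) (- x) m = - arrow_walk \<alpha> x m"
  by (simp add: arrow_walk_def arrow_walk_state_reflect)

lemma reaches_below_antimono:
  assumes le: "\<alpha> \<le> \<beta>" and reach: "\<exists>m\<le>n. arrow_walk \<beta> s m \<le> b"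
  shows "\<exists>m\<le>n. arrow_walk \<alpha> s m \<le> b"
proof -
  have "reflect_arrows \<beta> \<le> reflect_arrows \<alpha>"
    using le by (auto simp: le_fun_def reflect_arrows_def)
  moreover have "\<exists>m\<le>n. - b \<le> arrow_walk (reflect_arrows \<beta>) (- s) m"
    using reach by (auto simp: arrow_walk_reflect)
  ultimately obtain m where "m \<le> n" "- b \<le> arrow_walk (reflect_arrows \<alpha>) (- s) m"
    using reaches_above_mono by blast
  then show ?thesis
    by (auto simp: arrow_walk_reflect)
qed

section \<open>Walk laws as arrow expectations\<close>

definition arrow_box :: "int \<Rightarrow> nat \<Rightarrow> (int \<times> nat) list" where
  "arrow_box x N = List.product [x - int N .. x + int N] [0..<Suc N]"

lemma arrow_walk_state_cong:
  assumes "\<forall>j<m. \<beta> (arrow_walk \<alpha> x j, visits \<alpha> x j (arrow_walk \<alpha> x j))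
                = \<alpha> (arrow_walk \<alpha> x j, visits \<alpha> x j (arrow_walk \<alpha> x j))"
  shows "arrow_walk_state \<beta> x m = arrow_walk_state \<alpha> x m"
  using assms by (induction m) (auto simp: arrow_walk_def visits_def split: prod.split)

lemma card_earlier_less:
  fixes p :: "nat \<Rightarrow> 'a"
  assumes "j < n" "p j = p n"
  shows "card {i. i < j \<and> p i = p j} < card {i. i < n \<and> p i = p n}"
  using assms by (intro psubset_card_mono) auto

text \<open>The arrow read at time \<open>n\<close> by a walk following \<open>p\<close> has not been read before time \<open>n\<close>.\<close>

lemma arrow_walk_follows_upd:
  assumes "\<forall>k\<le>n. arrow_walk \<alpha> x k = p k"
  shows "\<forall>k\<le>n. arrow_walk (\<alpha>((p n, card {j. j < n \<and> p j = p n}) := b)) x k = p k"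
proof (intro allI impI)
  fix k assume "k \<le> n"
  have "visits \<alpha> x j (p j) = card {i. i < j \<and> p i = p j}" if "j < n" for j
    using assms that by (auto simp: visits_eq_card intro!: arg_cong[where f = card])
  then have "(p j, visits \<alpha> x j (p j)) \<noteq> (p n, card {j. j < n \<and> p j = p n})" if "j < n" for j
    using card_earlier_less[OF that, of p] that by auto
  then have "arrow_walk_state (\<alpha>((p n, card {j. j < n \<and> p j = p n}) := b)) x k = arrow_walk_state \<alpha> x k"
    using assms \<open>k \<le> n\<close> by (intro arrow_walk_state_cong) auto
  then show "arrow_walk (\<alpha>((p n, card {j. j < n \<and> p j = p n}) := b)) x k = p k"
    using assms \<open>k \<le> n\<close> by (simp add: arrow_walk_def)
qed

lemma arrow_walk_follows_Suc:
  "(\<forall>k\<le>Suc n. arrow_walk \<alpha> x k = p k) \<longleftrightarrow>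
     (\<forall>k\<le>n. arrow_walk \<alpha> x k = p k) \<and>
     p (Suc n) = (if \<alpha> (p n, card {j. j < n \<and> p j = p n}) then p n + 1 else p n - 1)"
proof -
  have "visits \<alpha> x n (p n) = card {j. j < n \<and> p j = p n}" if "\<forall>k\<le>n. arrow_walk \<alpha> x k = p k"
    using that by (auto simp: visits_eq_card intro!: arg_cong[where f = card])
  then have "arrow_walk \<alpha> x (Suc n) = (if \<alpha> (p n, card {j. j < n \<and> p j = p n}) then p n + 1 else p n - 1)"
    if "\<forall>k\<le>n. arrow_walk \<alpha> x k = p k"
    using that by (simp add: arrow_walk_Suc)
  moreover have "(\<forall>k\<le>Suc n. arrow_walk \<alpha> x k = p k) \<longleftrightarrow>
      (\<forall>k\<le>n. arrow_walk \<alpha> x k = p k) \<and> arrow_walk \<alpha> x (Suc n) = p (Suc n)"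
    by (auto simp: le_Suc_eq)
  ultimately show ?thesis
    by auto
qed

lemma path_prob_eq_arrow_expect:
  assumes "n \<le> N"
  shows "path_prob \<omega> x p n = arrow_expect \<omega> (arrow_box x N) (\<lambda>\<alpha>. of_bool (\<forall>k\<le>n. arrow_walk \<alpha> x k = p k))"
  using assms
proof (induction n)
  case 0
  then show ?case
    by (simp add: path_prob_def)
next
  case (Suc n)
  define c where "c = (p n, card {j. j < n \<and> p j = p n})"
  define f where "f = (\<lambda>\<alpha>. of_bool (\<forall>k\<le>n. arrow_walk \<alpha> x k = p k) :: real)"
  define g where "g = (\<lambda>b. of_bool (p (Suc n) = (if b then p n + 1 else p n - 1)) :: real)"
  have IH: "path_prob \<omega> x p n = arrow_expect \<omega> (arrow_box x N) f"
    using Suc by (simp add: f_def)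
  have split: "of_bool (\<forall>k\<le>Suc n. arrow_walk \<alpha> x k = p k) = f \<alpha> * g (\<alpha> c)" for \<alpha>
    by (simp add: arrow_walk_follows_Suc f_def g_def c_def)
  have prob_Suc: "path_prob \<omega> x p (Suc n) = path_prob \<omega> x p n * step_prob \<omega> p n"
    by (simp add: path_prob_def)
  have step: "step_prob \<omega> p n = \<omega> (fst c) (snd c) * g True + (1 - \<omega> (fst c) (snd c)) * g False"
    by (simp add: step_prob_def g_def c_def Let_def)
  show ?case
  proof (cases "\<exists>\<alpha>. \<forall>k\<le>n. arrow_walk \<alpha> x k = p k")
    case True
    then obtain \<alpha> where "\<forall>k\<le>n. arrow_walk \<alpha> x k = p k"
      by blast
    then have "\<bar>p n - x\<bar> \<le> int N"
      using arrow_walk_dist_le[of \<alpha> x n] Suc.prems by auto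
    moreover have "card {j. j < n \<and> p j = p n} \<le> card {..<n}"
      by (rule card_mono) auto
    then have "card {j. j < n \<and> p j = p n} \<le> N"
      using Suc.prems by simp
    ultimately have box: "c \<in> set (arrow_box x N)"
      by (auto simp: c_def arrow_box_def)
    have "f (\<alpha>(c := b)) = f \<alpha>" for \<alpha> b
      using arrow_walk_follows_upd[of n \<alpha> x p b]
        arrow_walk_follows_upd[of n "\<alpha>(c := b)" x p "\<alpha> c"]
      by (auto simp: f_def c_def)
    then have "arrow_expect \<omega> (arrow_box x N) (\<lambda>\<alpha>. f \<alpha> * g (\<alpha> c))
        = arrow_expect \<omega> (arrow_box x N) f * step_prob \<omega> p n"
      unfolding step using box arrow_expect_factor[of f "fst c" "snd c"] by simp
    with IH show ?thesis
      by (simp only: prob_Suc split)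
  next
    case False
    then have "f = (\<lambda>_. 0)" "(\<lambda>\<alpha>. of_bool (\<forall>k\<le>Suc n. arrow_walk \<alpha> x k = p k) :: real) = (\<lambda>_. 0)"
      by (auto simp: f_def fun_eq_iff arrow_walk_follows_Suc)
    with IH show ?thesis
      by (simp add: prob_Suc)
  qed
qed

lemma walk_law_sets_coordinate:
  assumes "walk_law \<omega> x M"
  shows "{X \<in> space M. R (X k)} \<in> sets M"
proof -
  have "(\<lambda>X. X k) \<in> path_M \<rightarrow>\<^sub>M count_space UNIV"
    unfolding path_M_def by (rule measurable_component_singleton) simp
  moreover have "sets M = sets path_M"
    using assms by (simp add: walk_law_def)
  ultimately have "(\<lambda>X. X k) \<in> M \<rightarrow>\<^sub>M count_space UNIV"
    using measurable_cong_sets by blast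
  from measurable_sets[OF this, of "Collect R"] show ?thesis
    by (simp add: vimage_def Int_def conj_commute)
qed

lemma walk_law_sets_Ex_le:
  assumes "walk_law \<omega> x M"
  shows "{X \<in> space M. \<exists>m\<le>n. R m (X m)} \<in> sets M"
proof -
  have "{X \<in> space M. \<exists>m\<le>n. R m (X m)} = (\<Union>m\<in>{..n}. {X \<in> space M. R m (X m)})"
    by auto
  then show ?thesis
    using walk_law_sets_coordinate[OF assms] by auto
qed

lemma walk_law_sets_All_le:
  assumes "walk_law \<omega> x M"
  shows "{X \<in> space M. \<forall>m\<le>n. R m (X m)} \<in> sets M"
proof -
  have "{X \<in> space M. \<forall>m\<le>n. R m (X m)} = (\<Inter>m\<in>{..n}. {X \<in> space M. R m (X m)})"
    by auto
  then show ?thesis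
    using walk_law_sets_coordinate[OF assms] by (auto intro!: sets.finite_INT)
qed

text \<open>Within \<open>n\<close> steps the walk reads only arrows of \<open>arrow_box x n\<close>, so these are all possible
  \<open>n\<close>-step prefixes, frozen after time \<open>n\<close>.\<close>

definition walk_prefixes :: "int \<Rightarrow> nat \<Rightarrow> (nat \<Rightarrow> int) set" where
  "walk_prefixes x n = (\<lambda>\<alpha> k. arrow_walk \<alpha> x (min k n)) ` {\<alpha>. Collect \<alpha> \<subseteq> set (arrow_box x n)}"

lemma finite_walk_prefixes: "finite (walk_prefixes x n)"
proof -
  have "{\<alpha>. Collect \<alpha> \<subseteq> set (arrow_box x n)} \<subseteq> (\<lambda>B c. c \<in> B) ` Pow (set (arrow_box x n))"
  proof
    fix \<alpha> :: arrows
    assume "\<alpha> \<in> {\<alpha>. Collect \<alpha> \<subseteq> set (arrow_box x n)}"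
    then have "Collect \<alpha> \<in> Pow (set (arrow_box x n))"
      by simp
    then show "\<alpha> \<in> (\<lambda>B c. c \<in> B) ` Pow (set (arrow_box x n))"
      by (rule image_eqI[rotated]) simp
  qed
  then have "finite {\<alpha>. Collect \<alpha> \<subseteq> set (arrow_box x n)}"
    by (rule finite_subset) simp
  then show ?thesis
    unfolding walk_prefixes_def by (rule finite_imageI)
qed

lemma walk_prefixes_follows_iff:
  assumes "p \<in> walk_prefixes x n"
  shows "(\<forall>k\<le>n. arrow_walk \<alpha> x k = p k) \<longleftrightarrow> p = (\<lambda>k. arrow_walk \<alpha> x (min k n))"
proof
  assume follows: "\<forall>k\<le>n. arrow_walk \<alpha> x k = p k"
  show "p = (\<lambda>k. arrow_walk \<alpha> x (min k n))"
  proof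
    fix k
    have "p k = p (min k n)"
      using assms by (auto simp: walk_prefixes_def)
    also have "\<dots> = arrow_walk \<alpha> x (min k n)"
      using follows by simp
    finally show "p k = arrow_walk \<alpha> x (min k n)" .
  qed
qed simp

lemma sum_walk_prefixes:
  "(\<Sum>p\<in>walk_prefixes x n. path_prob \<omega> x p n * of_bool (R p))
     = arrow_expect \<omega> (arrow_box x n) (\<lambda>\<alpha>. of_bool (R (\<lambda>k. arrow_walk \<alpha> x (min k n))))"
proof -
  let ?follows = "\<lambda>\<alpha> p. of_bool (\<forall>k\<le>n. arrow_walk \<alpha> x k = p k) * of_bool (R p) :: real"
  have "(\<Sum>p\<in>walk_prefixes x n. path_prob \<omega> x p n * of_bool (R p))
      = (\<Sum>p\<in>walk_prefixes x n. arrow_expect \<omega> (arrow_box x n) (\<lambda>\<alpha>. ?follows \<alpha> p))"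
    by (simp add: path_prob_eq_arrow_expect[OF order_refl] arrow_expect_cmult)
  also have "\<dots> = arrow_expect \<omega> (arrow_box x n) (\<lambda>\<alpha>. \<Sum>p\<in>walk_prefixes x n. ?follows \<alpha> p)"
    by (rule arrow_expect_sum[symmetric])
  also have "\<dots> = arrow_expect \<omega> (arrow_box x n) (\<lambda>\<alpha>. of_bool (R (\<lambda>k. arrow_walk \<alpha> x (min k n))))"
  proof (rule arrow_expect_cong_support)
    fix \<alpha> assume "Collect \<alpha> \<subseteq> set (arrow_box x n)"
    then have "(\<lambda>k. arrow_walk \<alpha> x (min k n)) \<in> walk_prefixes x n"
      by (auto simp: walk_prefixes_def)
    moreover have "?follows \<alpha> p = (if p = (\<lambda>k. arrow_walk \<alpha> x (min k n)) then of_bool (R p) else 0)"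
      if "p \<in> walk_prefixes x n" for p
      using walk_prefixes_follows_iff[OF that] by simp
    ultimately show "(\<Sum>p\<in>walk_prefixes x n. ?follows \<alpha> p) = of_bool (R (\<lambda>k. arrow_walk \<alpha> x (min k n)))"
      by (simp add: finite_walk_prefixes sum.delta' cong: sum.cong)
  qed
  finally show ?thesis .
qed

lemma walk_prefixes_eqI:
  assumes "p \<in> walk_prefixes x n" "q \<in> walk_prefixes x n" "\<forall>k\<le>n. p k = q k"
  shows "p = q"
proof
  fix k
  have "p k = p (min k n)" "q k = q (min k n)"
    using assms(1,2) by (auto simp: walk_prefixes_def)
  then show "p k = q k"
    using assms(3) by simp
qed

lemma walk_law_measure_cylinders:
  assumes law: "walk_law \<omega> x M" and A: "A \<subseteq> walk_prefixes x n"
  shows "measure M (\<Union>p\<in>A. {X \<in> space M. \<forall>k\<le>n. X k = p k}) = (\<Sum>p\<in>A. path_prob \<omega> x p n)"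
proof -
  interpret prob_space M
    using law by (simp add: walk_law_def)
  have cyl_sets: "{X \<in> space M. \<forall>k\<le>n. X k = p k} \<in> sets M" for p
    by (rule walk_law_sets_All_le[OF law])
  have fin: "finite A"
    using A finite_walk_prefixes by (rule finite_subset)
  have disj: "disjoint_family_on (\<lambda>p. {X \<in> space M. \<forall>k\<le>n. X k = p k}) A"
    unfolding disjoint_family_on_def
  proof (intro ballI impI)
    fix p q assume "p \<in> A" "q \<in> A" "p \<noteq> q"
    have "p \<in> walk_prefixes x n" "q \<in> walk_prefixes x n"
      using A \<open>p \<in> A\<close> \<open>q \<in> A\<close> by auto
    with \<open>p \<noteq> q\<close> have "\<not> (\<forall>k\<le>n. p k = q k)"
      using walk_prefixes_eqI by blast
    then show "{X \<in> space M. \<forall>k\<le>n. X k = p k} \<inter> {X \<in> space M. \<forall>k\<le>n. X k = q k} = {}"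
      by auto
  qed
  have "measure M (\<Union>p\<in>A. {X \<in> space M. \<forall>k\<le>n. X k = p k})
      = (\<Sum>p\<in>A. measure M {X \<in> space M. \<forall>k\<le>n. X k = p k})"
    using cyl_sets by (intro finite_measure_finite_Union[OF fin _ disj]) blast
  also have "\<dots> = (\<Sum>p\<in>A. path_prob \<omega> x p n)"
    using law by (intro sum.cong) (auto simp: walk_law_def)
  finally show ?thesis .
qed

lemma walk_law_measure_event:
  assumes law: "walk_law \<omega> x M"
    and dep: "\<And>X Y. \<forall>k\<le>n. X k = Y k \<Longrightarrow> Q X = Q Y"
    and event: "{X \<in> space M. Q X} \<in> sets M"
  shows "measure M {X \<in> space M. Q X} = arrow_expect \<omega> (arrow_box x n) (\<lambda>\<alpha>. of_bool (Q (arrow_walk \<alpha> x)))"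
proof -
  interpret prob_space M
    using law by (simp add: walk_law_def)
  let ?cyl = "\<lambda>p. {X \<in> space M. \<forall>k\<le>n. X k = p k}"
  let ?U = "\<Union>p\<in>walk_prefixes x n. ?cyl p"
  let ?V = "\<Union>p\<in>{p \<in> walk_prefixes x n. Q p}. ?cyl p"
  have cyl_sets: "?cyl p \<in> sets M" for p
    by (rule walk_law_sets_All_le[OF law])
  have U_sets: "?U \<in> sets M"
    by (rule sets.finite_UN[OF finite_walk_prefixes cyl_sets])
  have "finite {p \<in> walk_prefixes x n. Q p}"
    by (rule finite_subset[OF _ finite_walk_prefixes]) blast
  then have V_sets: "?V \<in> sets M"
    by (rule sets.finite_UN[OF _ cyl_sets])
  have "prob ?U = 1"
    using walk_law_measure_cylinders[OF law order_refl] sum_walk_prefixes[where R = "\<lambda>_. True"]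
    by simp
  then have "AE X in M. X \<in> ?U"
    using AE_in_set_eq_1[OF U_sets] by blast
  then have "AE X in M. X \<in> {X \<in> space M. Q X} \<longleftrightarrow> X \<in> ?V"
  proof (rule AE_mp, intro AE_I2 impI)
    fix X assume "X \<in> ?U"
    then obtain p where "p \<in> walk_prefixes x n" "X \<in> ?cyl p"
      by blast
    show "X \<in> {X \<in> space M. Q X} \<longleftrightarrow> X \<in> ?V"
    proof
      assume "X \<in> {X \<in> space M. Q X}"
      moreover have "Q X \<longleftrightarrow> Q p"
        using \<open>X \<in> ?cyl p\<close> by (intro dep) simp
      ultimately show "X \<in> ?V"
        using \<open>p \<in> walk_prefixes x n\<close> \<open>X \<in> ?cyl p\<close> by blast
    next
      assume "X \<in> ?V"
      then obtain q where "Q q" "X \<in> ?cyl q"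
        by blast
      moreover have "Q X \<longleftrightarrow> Q q"
        using \<open>X \<in> ?cyl q\<close> by (intro dep) simp
      ultimately show "X \<in> {X \<in> space M. Q X}"
        by simp
    qed
  qed
  then have "measure M {X \<in> space M. Q X} = measure M ?V"
    using event V_sets by (rule measure_eq_AE)
  also have "\<dots> = (\<Sum>p\<in>{p \<in> walk_prefixes x n. Q p}. path_prob \<omega> x p n)"
    by (rule walk_law_measure_cylinders[OF law]) blast
  also have "\<dots> = (\<Sum>p\<in>walk_prefixes x n. path_prob \<omega> x p n * of_bool (Q p))"
    by (simp add: sum.inter_filter[OF finite_walk_prefixes] of_bool_def if_distrib cong: if_cong)
  also have "\<dots> = arrow_expect \<omega> (arrow_box x n) (\<lambda>\<alpha>. of_bool (Q (arrow_walk \<alpha> x)))"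
    unfolding sum_walk_prefixes by (intro arrow_expect_cong_support arg_cong[where f = of_bool] dep) simp
  finally show ?thesis .
qed

section \<open>Comparison of walk laws and of speeds\<close>

lemma walk_law_prob_mono:
  assumes L1: "walk_law \<omega>1 x M1" and L2: "walk_law \<omega>2 x M2"
    and env: "unit_env \<omega>1" "unit_env \<omega>2" "\<omega>1 \<le> \<omega>2"
    and dep: "\<And>X Y. \<forall>k\<le>n. X k = Y k \<Longrightarrow> Q X = Q Y"
    and up: "\<And>\<alpha> \<beta>. \<alpha> \<le> \<beta> \<Longrightarrow> Q (arrow_walk \<alpha> x) \<Longrightarrow> Q (arrow_walk \<beta> x)"
    and sets1: "{X \<in> space M1. Q X} \<in> sets M1" and sets2: "{X \<in> space M2. Q X} \<in> sets M2"
  shows "measure M1 {X \<in> space M1. Q X} \<le> measure M2 {X \<in> space M2. Q X}"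
proof -
  have "mono ((\<lambda>\<alpha>. of_bool (Q (arrow_walk \<alpha> x))) :: arrows \<Rightarrow> real)"
  proof (rule monoI)
    fix \<alpha> \<beta> :: arrows assume "\<alpha> \<le> \<beta>"
    then show "of_bool (Q (arrow_walk \<alpha> x)) \<le> (of_bool (Q (arrow_walk \<beta> x)) :: real)"
      using up[of \<alpha> \<beta>] by (cases "Q (arrow_walk \<alpha> x)") simp_all
  qed
  then have "arrow_expect \<omega>1 (arrow_box x n) (\<lambda>\<alpha>. of_bool (Q (arrow_walk \<alpha> x)))
      \<le> arrow_expect \<omega>2 (arrow_box x n) (\<lambda>\<alpha>. of_bool (Q (arrow_walk \<alpha> x)))"
    by (rule arrow_expect_mono_env[OF env])
  then show ?thesis
    using walk_law_measure_event[OF L1 dep sets1] walk_law_measure_event[OF L2 dep sets2] by simp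
qed

lemma ex_le_cong:
  assumes "\<forall>k\<le>n. X k = Y k"
  shows "(\<exists>m\<le>n. P (X m)) \<longleftrightarrow> (\<exists>m\<le>n. P (Y m))"
proof -
  have "P (X m) \<longleftrightarrow> P (Y m)" if "m \<le> n" for m
    using assms that by simp
  then show ?thesis
    by blast
qed

lemma walk_law_prob_reaches_above_mono:
  assumes "walk_law \<omega>1 x M1" "walk_law \<omega>2 x M2" "unit_env \<omega>1" "unit_env \<omega>2" "\<omega>1 \<le> \<omega>2"
  shows "measure M1 {X \<in> space M1. \<exists>m\<le>n. t \<le> real_of_int (X m)}
    \<le> measure M2 {X \<in> space M2. \<exists>m\<le>n. t \<le> real_of_int (X m)}"
proof (rule walk_law_prob_mono[OF assms])
  show "(\<exists>m\<le>n. t \<le> real_of_int (X m)) = (\<exists>m\<le>n. t \<le> real_of_int (Y m))"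
    if "\<forall>k\<le>n. X k = Y k" for X Y :: "nat \<Rightarrow> int"
    using that by (rule ex_le_cong)
  show "\<exists>m\<le>n. t \<le> real_of_int (arrow_walk \<beta> x m)"
    if "\<alpha> \<le> \<beta>" "\<exists>m\<le>n. t \<le> real_of_int (arrow_walk \<alpha> x m)" for \<alpha> \<beta>
    using reaches_above_mono[OF that(1), of n "\<lceil>t\<rceil>" x] that(2) by (simp add: ceiling_le_iff)
qed (rule walk_law_sets_Ex_le, fact)+

lemma walk_law_prob_reaches_below_antimono:
  assumes L1: "walk_law \<omega>1 x M1" and L2: "walk_law \<omega>2 x M2"
    and env: "unit_env \<omega>1" "unit_env \<omega>2" "\<omega>1 \<le> \<omega>2"
  shows "measure M2 {X \<in> space M2. \<exists>m\<le>n. real_of_int (X m) \<le> t}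
    \<le> measure M1 {X \<in> space M1. \<exists>m\<le>n. real_of_int (X m) \<le> t}"
proof -
  let ?Q = "\<lambda>X :: nat \<Rightarrow> int. \<exists>m\<le>n. real_of_int (X m) \<le> t"
  have sets1: "{X \<in> space M1. ?Q X} \<in> sets M1" and sets2: "{X \<in> space M2. ?Q X} \<in> sets M2"
    by (rule walk_law_sets_Ex_le[OF L1], rule walk_law_sets_Ex_le[OF L2])
  \<comment> \<open>The complementary event, staying above \<open>t\<close>, is increasing in the arrows.\<close>
  have "measure M1 {X \<in> space M1. \<not> ?Q X} \<le> measure M2 {X \<in> space M2. \<not> ?Q X}"
  proof (rule walk_law_prob_mono[OF L1 L2 env])
    show "(\<not> ?Q X) = (\<not> ?Q Y)" if "\<forall>k\<le>n. X k = Y k" for X Y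
      using ex_le_cong[OF that, of "\<lambda>y. real_of_int y \<le> t"] by simp
    show "\<not> ?Q (arrow_walk \<beta> x)" if "\<alpha> \<le> \<beta>" "\<not> ?Q (arrow_walk \<alpha> x)" for \<alpha> \<beta>
      using reaches_below_antimono[OF that(1), of n x "\<lfloor>t\<rfloor>"] that(2) by (auto simp: le_floor_iff)
    show "{X \<in> space M1. \<not> ?Q X} \<in> sets M1"
      using sets1 by (rule sets.sets_Collect_neg)
    show "{X \<in> space M2. \<not> ?Q X} \<in> sets M2"
      using sets2 by (rule sets.sets_Collect_neg)
  qed
  moreover have "prob_space M1" "prob_space M2"
    using L1 L2 by (simp_all add: walk_law_def)
  ultimately show ?thesis
    using prob_space.prob_neg[OF _ sets1] prob_space.prob_neg[OF _ sets2] by simp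
qed

lemma prob_tendsto_1_of_AE_eventually:
  assumes "prob_space M" and G: "\<And>n. G n \<in> sets M"
    and ae: "AE X in M. eventually (\<lambda>n. X \<in> G n) sequentially"
  shows "(\<lambda>n. measure M (G n)) \<longlonglongrightarrow> 1"
proof -
  interpret prob_space M
    by fact
  define B where "B n = (\<Inter>m\<in>{n..}. G m)" for n
  have B: "B n \<in> sets M" for n
    unfolding B_def using G by (intro sets.countable_INT) auto
  have "incseq B"
    unfolding B_def incseq_def by auto
  then have "(\<lambda>n. measure M (B n)) \<longlonglongrightarrow> measure M (\<Union>n. B n)"
    using B by (intro finite_Lim_measure_incseq) auto
  moreover have "AE X in M. X \<in> (\<Union>n. B n)"
    using ae by (rule AE_mp) (auto simp: eventually_sequentially B_def intro!: AE_I2)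
  then have "measure M (\<Union>n. B n) = 1"
    using B prob_eq_1[of "\<Union>n. B n"] by blast
  ultimately have lim_B: "(\<lambda>n. measure M (B n)) \<longlonglongrightarrow> 1"
    by simp
  have "\<forall>n. measure M (B n) \<le> measure M (G n)"
    using G by (intro allI finite_measure_mono) (auto simp: B_def)
  moreover have "\<forall>n. measure M (G n) \<le> 1"
    by (intro allI prob_le_1)
  ultimately show ?thesis
    by (rule tendsto_sandwich[OF always_eventually always_eventually lim_B tendsto_const])
qed

lemma eventually_less_of_ratio_tendsto:
  fixes y :: "nat \<Rightarrow> real"
  assumes "(\<lambda>n. y n / real n) \<longlonglongrightarrow> v" and "c < v"
  shows "eventually (\<lambda>n. c * real n < y n) sequentially"
  using order_tendstoD(1)[OF assms] eventually_gt_at_top[of 0]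
  by eventually_elim (simp add: pos_less_divide_eq mult.commute)

lemma eventually_all_less_of_ratio_tendsto:
  fixes y :: "nat \<Rightarrow> real"
  assumes lim: "(\<lambda>n. y n / real n) \<longlonglongrightarrow> v" and "v < c" and "0 < c"
  shows "eventually (\<lambda>n. \<forall>m\<le>n. y m < c * real n) sequentially"
proof -
  obtain N where N: "\<And>m. N \<le> m \<Longrightarrow> y m / real m < c"
    using order_tendstoD(2)[OF lim \<open>v < c\<close>] by (auto simp: eventually_sequentially)
  define K where "K = Max (y ` {..N})"
  \<comment> \<open>Early values are bounded by \<open>K\<close>; late ones grow at most like \<open>c m \<le> c n\<close>.\<close>
  obtain n0 :: nat where "K / c < real n0"
    using reals_Archimedean2 by blast
  then have "K < c * real n0"
    using \<open>0 < c\<close> by (simp add: pos_divide_less_eq mult.commute)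
  have "\<forall>m\<le>n. y m < c * real n" if "max n0 (Suc N) \<le> n" for n
  proof (intro allI impI)
    fix m assume "m \<le> n"
    show "y m < c * real n"
    proof (cases "m \<le> N")
      case True
      then have "y m \<le> K"
        by (simp add: K_def)
      also have "K < c * real n0"
        by fact
      also have "\<dots> \<le> c * real n"
        using that \<open>0 < c\<close> by simp
      finally show ?thesis .
    next
      case False
      then have "y m < c * real m"
        using N[of m] by (simp add: pos_divide_less_eq mult.commute)
      also have "\<dots> \<le> c * real n"
        using \<open>m \<le> n\<close> \<open>0 < c\<close> by simp
      finally show ?thesis .
    qed
  qed
  then show ?thesis
    unfolding eventually_sequentially by blast
qed

lemma ratio_limit_le_of_reach_prob_le:
  fixes Y :: "'a \<Rightarrow> nat \<Rightarrow> real" and Z :: "'b \<Rightarrow> nat \<Rightarrow> real"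
  assumes "prob_space M1" "prob_space M2"
    and sets1: "\<And>n t. {X \<in> space M1. \<exists>m\<le>n. t \<le> Y X m} \<in> sets M1"
    and sets2: "\<And>n t. {X \<in> space M2. \<exists>m\<le>n. t \<le> Z X m} \<in> sets M2"
    and dom: "\<And>n t. measure M1 {X \<in> space M1. \<exists>m\<le>n. t \<le> Y X m}
                    \<le> measure M2 {X \<in> space M2. \<exists>m\<le>n. t \<le> Z X m}"
    and lim1: "AE X in M1. (\<lambda>n. Y X n / real n) \<longlonglongrightarrow> v1"
    and lim2: "AE X in M2. (\<lambda>n. Z X n / real n) \<longlonglongrightarrow> v2"
    and "0 < v1"
  shows "v1 \<le> v2"
proof (rule ccontr)
  assume "\<not> v1 \<le> v2"
  define c where "c = (v1 + max v2 0) / 2"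
  have c: "0 < c" "v2 < c" "c < v1"
    using \<open>\<not> v1 \<le> v2\<close> \<open>0 < v1\<close> by (auto simp: c_def)
  define G1 where "G1 n = {X \<in> space M1. \<exists>m\<le>n. c * real n \<le> Y X m}" for n
  define G2 where "G2 n = {X \<in> space M2. \<exists>m\<le>n. c * real n \<le> Z X m}" for n
  have G1_sets: "G1 n \<in> sets M1" and G2_sets: "G2 n \<in> sets M2" for n
    unfolding G1_def G2_def by (rule sets1, rule sets2)
  have "AE X in M1. eventually (\<lambda>n. X \<in> G1 n) sequentially"
    using lim1 AE_space
  proof eventually_elim
    case (elim X)
    from eventually_less_of_ratio_tendsto[OF elim(1) c(3)] show ?case
      by eventually_elim (use elim(2) in \<open>auto simp: G1_def\<close>)
  qed
  then have lim_G1: "(\<lambda>n. measure M1 (G1 n)) \<longlonglongrightarrow> 1"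
    by (rule prob_tendsto_1_of_AE_eventually[OF \<open>prob_space M1\<close> G1_sets])
  have "AE X in M2. eventually (\<lambda>n. X \<in> space M2 - G2 n) sequentially"
    using lim2 AE_space
  proof eventually_elim
    case (elim X)
    from eventually_all_less_of_ratio_tendsto[OF elim(1) c(2) c(1)] show ?case
      by eventually_elim (use elim(2) in \<open>auto simp: G2_def not_le\<close>)
  qed
  then have "(\<lambda>n. measure M2 (space M2 - G2 n)) \<longlonglongrightarrow> 1"
    using G2_sets by (intro prob_tendsto_1_of_AE_eventually[OF \<open>prob_space M2\<close>]) blast
  moreover have "measure M2 (space M2 - G2 n) = 1 - measure M2 (G2 n)" for n
    by (rule prob_space.prob_compl[OF \<open>prob_space M2\<close> G2_sets])
  ultimately have "(\<lambda>n. 1 - (1 - measure M2 (G2 n))) \<longlonglongrightarrow> 1 - 1"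
    by (intro tendsto_diff tendsto_const) simp
  then have lim_G2: "(\<lambda>n. measure M2 (G2 n)) \<longlonglongrightarrow> 0"
    by simp
  have "measure M1 (G1 n) \<le> measure M2 (G2 n)" for n
    unfolding G1_def G2_def by (rule dom)
  then have "1 \<le> (0::real)"
    by (intro LIMSEQ_le[OF lim_G1 lim_G2] exI[of _ 0] allI impI)
  then show False
    by simp
qed

lemma walk_law_speed_mono:
  assumes L1: "walk_law \<omega>1 x M1" and L2: "walk_law \<omega>2 x M2"
    and env: "unit_env \<omega>1" "unit_env \<omega>2" "\<omega>1 \<le> \<omega>2"
    and lim1: "AE X in M1. (\<lambda>n. real_of_int (X n) / real n) \<longlonglongrightarrow> v1"
    and lim2: "AE X in M2. (\<lambda>n. real_of_int (X n) / real n) \<longlonglongrightarrow> v2"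
  shows "v1 \<le> v2"
proof -
  have P: "prob_space M1" "prob_space M2"
    using L1 L2 by (simp_all add: walk_law_def)
  \<comment> \<open>For positive \<open>v1\<close> compare running maxima; otherwise compare running minima, i.e. running
      maxima of the reflected paths, with the roles of the two walks exchanged.\<close>
  show ?thesis
  proof (cases "0 < v1")
    case True
    show ?thesis
    proof (rule ratio_limit_le_of_reach_prob_le[OF P _ _ _ lim1 lim2 True])
      show "{X \<in> space M1. \<exists>m\<le>n. t \<le> real_of_int (X m)} \<in> sets M1" for n t
        by (rule walk_law_sets_Ex_le[OF L1])
      show "{X \<in> space M2. \<exists>m\<le>n. t \<le> real_of_int (X m)} \<in> sets M2" for n t
        by (rule walk_law_sets_Ex_le[OF L2])
      show "measure M1 {X \<in> space M1. \<exists>m\<le>n. t \<le> real_of_int (X m)}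
          \<le> measure M2 {X \<in> space M2. \<exists>m\<le>n. t \<le> real_of_int (X m)}" for n t
        by (rule walk_law_prob_reaches_above_mono[OF L1 L2 env])
    qed
  next
    case False
    show ?thesis
    proof (rule ccontr)
      assume "\<not> v1 \<le> v2"
      then have "0 < - v2"
        using False by simp
      have "- v2 \<le> - v1"
      proof (rule ratio_limit_le_of_reach_prob_le[where Y = "\<lambda>X n. - real_of_int (X n)"
            and Z = "\<lambda>X n. - real_of_int (X n)", OF P(2) P(1)])
        show "measure M2 {X \<in> space M2. \<exists>m\<le>n. t \<le> - real_of_int (X m)}
            \<le> measure M1 {X \<in> space M1. \<exists>m\<le>n. t \<le> - real_of_int (X m)}" for n t
          using walk_law_prob_reaches_below_antimono[OF L1 L2 env, of n "- t"] by (simp add: le_minus_iff)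
        show "AE X in M2. (\<lambda>n. - real_of_int (X n) / real n) \<longlonglongrightarrow> - v2"
          using lim2 by eventually_elim (simp add: tendsto_minus)
        show "AE X in M1. (\<lambda>n. - real_of_int (X n) / real n) \<longlonglongrightarrow> - v1"
          using lim1 by eventually_elim (simp add: tendsto_minus)
        show "{X \<in> space M1. \<exists>m\<le>n. t \<le> - real_of_int (X m)} \<in> sets M1" for n t
          by (rule walk_law_sets_Ex_le[OF L1])
        show "{X \<in> space M2. \<exists>m\<le>n. t \<le> - real_of_int (X m)} \<in> sets M2" for n t
          by (rule walk_law_sets_Ex_le[OF L2])
      qed fact
      then show False
        using \<open>\<not> v1 \<le> v2\<close> by simp
    qed
  qed
qed

lemma unit_env_if_Omega_plus:
  assumes "\<omega> \<in> Omega_plus"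
  shows "unit_env \<omega>"
  unfolding unit_env_def
proof (intro allI)
  fix x i
  have "1/2 \<le> \<omega> x i \<and> \<omega> x i \<le> 1"
    using assms by (simp add: Omega_plus_def)
  then show "0 \<le> \<omega> x i \<and> \<omega> x i \<le> 1"
    by linarith
qed

theorem mainTheorem17:
  fixes Pbar :: "(env \<times> env) measure"
    and P :: "env \<Rightarrow> (nat \<Rightarrow> int) measure"
    and v1 v2 :: real
  assumes "prob_space Pbar"
    and "sets Pbar = sets (env_M \<Otimes>\<^sub>M env_M)"
    and "AE w in Pbar. fst w \<in> Omega_plus \<and> snd w \<in> Omega_plus"
    and "AE w in Pbar. env_le (fst w) (snd w)"
    and "stationary_ergodic Pbar (\<lambda>w. nonneg_part (fst w))"
    and "stationary_ergodic Pbar (\<lambda>w. nonneg_part (snd w))"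
    and "\<forall>\<omega> \<in> Omega_plus. walk_law \<omega> 0 (P \<omega>)"
    and "AE w in Pbar. AE X in P (fst w).
           (\<lambda>n. real_of_int (X n) / real n) \<longlonglongrightarrow> v1"
    and "AE w in Pbar. AE X in P (snd w).
           (\<lambda>n. real_of_int (X n) / real n) \<longlonglongrightarrow> v2"
  shows "v1 \<le> v2"
proof -
  interpret prob_space Pbar
    by fact
  \<comment> \<open>The comparison holds for every ordered pair of environments, so a single pair on which both
      speeds are attained suffices.\<close>
  obtain w where "fst w \<in> Omega_plus" "snd w \<in> Omega_plus" "env_le (fst w) (snd w)"
    and lim1: "AE X in P (fst w). (\<lambda>n. real_of_int (X n) / real n) \<longlonglongrightarrow> v1"
    and lim2: "AE X in P (snd w). (\<lambda>n. real_of_int (X n) / real n) \<longlonglongrightarrow> v2"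
    using eventually_happens'[OF ae_filter_bot AE_conjI[OF assms(3) AE_conjI[OF assms(4) AE_conjI[OF assms(8,9)]]]]
    by blast
  then show ?thesis
    using assms(7) unit_env_if_Omega_plus
    by (intro walk_law_speed_mono[OF _ _ _ _ _ lim1 lim2]) (auto simp: env_le_def le_fun_def)
qed

end
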